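(* Let $A$ be a group and $\phi$ a surjective, proper virtual endomorphism of $A$. Let $\Gamma\le\mathrm{Aut}(A)$ be such that $\phi$ and $\Gamma$ are mutually stable. Then the action of $A\rtimes\Gamma$ on $\mathcal{T}_\phi$ is self-similar.
   Context: A virtual endomorphism of a group $A$ is a homomorphism $\phi$ from a finite index subgroup of $A$ to $A$; write $\phi^{-n}(A)$ for the iterated preimages ($\phi^{-0}(A)=A$). $\phi$ is proper if $\bigcap_{n}\phi^{-n}(A)=\{1\}$; a proper virtual endomorphism is injective, so a surjective proper one is a bijection from $\phi^{-1}(A)$ onto $A$. For $\Gamma\le\mathrm{Aut}(A)$, $\phi$ is $\Gamma$-stable if $\gamma(\phi^{-n}(A))=\phi^{-n}(A)$ for all $\gamma\in\Gamma$, $n\in\mathbb{N}$. For bijective $\phi$, $\phi$ and $\Gamma$ are mutually stable if $\phi$ is $\Gamma$-stable and, for each $\gamma\in\Gamma$, the automorphism $\phi\circ\gamma|_{\phi^{-1}(A)}\circ\phi^{-1}$ of $A$ lies in $\Gamma$. The tree of cosets $\mathcal{T}_\phi$ has vertex set $\coprod_{n\ge0}A/\phi^{-n}(A)$ with edges from $a\phi^{-n}(A)$ to $a\phi^{-(n+1)}(A)$; $A\rtimes\Gamma$ acts on it by $(a,\gamma).(a'\phi^{-n}(A))=a\gamma(a')\phi^{-n}(A)$. When $\phi$ is surjective, $\mathcal{T}_\phi$ is isomorphic to the rooted $d$-regular tree $\mathcal{T}_d$ with $d=[A:\phi^{-1}(A)]$. Self-similarity of the action means: writing $B=\phi^{-1}(A)$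 and choosing a transversal $T$ of $A/B$, identify for each $t\in T$ the subtree of $\mathcal{T}_\phi$ rooted at $tB$ (all cosets contained in $tB$) with $\mathcal{T}_\phi$ via $\delta_{tB}: a\phi^{-(n+1)}(A)\mapsto \phi(t^{-1}a)\phi^{-n}(A)$; then for every $g\in A\rtimes\Gamma$ and every $t\in T$, if $g$ sends $tB$ to $t'B$ ($t'\in T$), the tree automorphism $\delta_{t'B}\circ g\circ\delta_{tB}^{-1}$ of $\mathcal{T}_\phi$ is the action of some element of $A\rtimes\Gamma$. (Equivalently, the induced action of $A\rtimes \Gamma$ on $\mathcal{T}_d$ under the corresponding identification has image a self-similar subgroup of $\mathrm{Aut}(\mathcal{T}_d)$, i.e. one closed under taking level-1 states.) *)

theory Defs
  imports "HOL-Algebra.Algebra"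
begin

primrec vpre :: "('a, 'b) monoid_scheme \<Rightarrow> 'a set \<Rightarrow> ('a \<Rightarrow> 'a) \<Rightarrow> nat \<Rightarrow> 'a set" where
  "vpre G B phi 0 = carrier G"
| "vpre G B phi (Suc n) = {x \<in> B. phi x \<in> vpre G B phi n}"

definition virtual_endo :: "('a, 'b) monoid_scheme \<Rightarrow> 'a set \<Rightarrow> ('a \<Rightarrow> 'a) \<Rightarrow> bool" where
  "virtual_endo G B phi \<longleftrightarrow> subgroup B G \<and> finite {a <#\<^bsub>G\<^esub> B | a. a \<in> carrier G}
     \<and> phi \<in> hom (G\<lparr>carrier := B\<rparr>) G"

definition proper_ve :: "('a, 'b) monoid_scheme \<Rightarrow> 'a set \<Rightarrow> ('a \<Rightarrow> 'a) \<Rightarrow> bool" where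
  "proper_ve G B phi \<longleftrightarrow> (\<Inter>n. vpre G B phi n) = {\<one>\<^bsub>G\<^esub>}"

definition stable_ve :: "('a, 'b) monoid_scheme \<Rightarrow> 'a set \<Rightarrow> ('a \<Rightarrow> 'a) \<Rightarrow> ('a \<Rightarrow> 'a) set \<Rightarrow> bool" where
  "stable_ve G B phi \<Gamma> \<longleftrightarrow> (\<forall>\<gamma>\<in>\<Gamma>. \<forall>n. \<gamma> ` vpre G B phi n = vpre G B phi n)"

text \<open>Mutual stability (for bijective phi : B -> carrier G).\<close>
definition mutually_stable :: "('a, 'b) monoid_scheme \<Rightarrow> 'a set \<Rightarrow> ('a \<Rightarrow> 'a) \<Rightarrow> ('a \<Rightarrow> 'a) set \<Rightarrow> bool" where
  "mutually_stable G B phi \<Gamma> \<longleftrightarrow> stable_ve G B phi \<Gamma> \<and>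
     (\<forall>\<gamma>\<in>\<Gamma>. (\<lambda>a\<in>carrier G. phi (\<gamma> (the_inv_into B phi a))) \<in> \<Gamma>)"

definition coset_tree :: "('a, 'b) monoid_scheme \<Rightarrow> 'a set \<Rightarrow> ('a \<Rightarrow> 'a) \<Rightarrow> (nat \<times> 'a set) set" where
  "coset_tree G B phi = {(n, C) | n C. \<exists>a\<in>carrier G. C = a <#\<^bsub>G\<^esub> vpre G B phi n}"

definition tree_act :: "('a, 'b) monoid_scheme \<Rightarrow> 'a set \<Rightarrow> ('a \<Rightarrow> 'a) \<Rightarrow> 'a \<times> ('a \<Rightarrow> 'a)
    \<Rightarrow> nat \<times> 'a set \<Rightarrow> nat \<times> 'a set" where
  "tree_act G B phi g v = (fst v,
     (fst g \<otimes>\<^bsub>G\<^esub> snd g (SOME a'. a' \<in> snd v)) <#\<^bsub>G\<^esub> vpre G B phi (fst v))"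

definition subtree_at :: "('a, 'b) monoid_scheme \<Rightarrow> 'a set \<Rightarrow> ('a \<Rightarrow> 'a) \<Rightarrow> 'a \<Rightarrow> (nat \<times> 'a set) set" where
  "subtree_at G B phi t = {(Suc n, C) | n C. (Suc n, C) \<in> coset_tree G B phi \<and>
      C \<subseteq> t <#\<^bsub>G\<^esub> vpre G B phi 1}"

definition delta :: "('a, 'b) monoid_scheme \<Rightarrow> 'a set \<Rightarrow> ('a \<Rightarrow> 'a) \<Rightarrow> 'a \<Rightarrow> nat \<times> 'a set \<Rightarrow> nat \<times> 'a set" where
  "delta G B phi t v = (fst v - 1,
     phi (inv\<^bsub>G\<^esub> t \<otimes>\<^bsub>G\<^esub> (SOME a. a \<in> snd v)) <#\<^bsub>G\<^esub> vpre G B phi (fst v - 1))"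

definition transversal :: "('a, 'b) monoid_scheme \<Rightarrow> 'a set \<Rightarrow> 'a set \<Rightarrow> bool" where
  "transversal G B T \<longleftrightarrow> T \<subseteq> carrier G \<and>
     (\<forall>a\<in>carrier G. \<exists>!t. t \<in> T \<and> t \<in> a <#\<^bsub>G\<^esub> B)"

definition self_similar_action :: "('a, 'b) monoid_scheme \<Rightarrow> 'a set \<Rightarrow> ('a \<Rightarrow> 'a) \<Rightarrow> ('a \<Rightarrow> 'a) set \<Rightarrow> bool" where
  "self_similar_action G B phi \<Gamma> \<longleftrightarrow>
    (\<forall>T. transversal G (vpre G B phi 1) T \<longrightarrow>
      (\<forall>a\<in>carrier G. \<forall>\<gamma>\<in>\<Gamma>. \<forall>t\<in>T. \<forall>t'\<in>T.
         tree_act G B phi (a, \<gamma>) (1, t <#\<^bsub>G\<^esub> vpre G B phi 1) = (1, t' <#\<^bsub>G\<^esub> vpre G B phi 1) \<longrightarrow>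
         (\<exists>a''\<in>carrier G. \<exists>\<gamma>''\<in>\<Gamma>. \<forall>v\<in>coset_tree G B phi.
            delta G B phi t' (tree_act G B phi (a, \<gamma>)
               (the_inv_into (subtree_at G B phi t) (delta G B phi t) v))
            = tree_act G B phi (a'', \<gamma>'') v)))"

end

theory Submission
  imports Defs
begin

(* Write V n for the iterated preimages, so V 1 = B. Every vertex of the coset tree has the form
   phi(b) V n with b in B, because phi is surjective, and delta_tB identifies the subtree below tB
   with the whole tree by  t b V (n+1) |-> phi(b) V n.  If (a, gamma) maps tB to t'B then
   a gamma(t) = t' k for some k in B, so (a, gamma) sends t b V (n+1) to t' k gamma(b) V (n+1),
   and delta_t'B maps this to phi(k) phi(gamma(b)) V n.  Properness makes phi injective, so
   gamma' = phi gamma phi^-1 is well defined; it lies in Gamma by mutual stability, and the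
   section of (a, gamma) at tB is (phi(k), gamma'). *)

no_notation (ASCII) subset_mset (infix \<open><#\<close> 50)

lemma (in group) lcos_mem_iff:
  assumes "subgroup H G" "x \<in> carrier G"
  shows "y \<in> x <# H \<longleftrightarrow> y \<in> carrier G \<and> inv x \<otimes> y \<in> H"
  using subgroup.l_coset_eq_rcong[OF assms(1) is_group assms(2)] assms(2)
  by (auto simp: r_congruent_def)

lemma (in group) lcos_eq_iff:
  assumes "subgroup H G" "x \<in> carrier G" "y \<in> carrier G"
  shows "x <# H = y <# H \<longleftrightarrow> inv x \<otimes> y \<in> H"
  by (metis assms lcos_mem_iff lcos_self l_repr_independence)

lemma (in group) lcos_mult_absorb:
  assumes "subgroup H G" "x \<in> carrier G" "h \<in> H"
  shows "(x \<otimes> h) <# H = x <# H"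
proof -
  have "x \<otimes> h \<in> x <# H"
    unfolding l_coset_def using assms(3) by blast
  then show ?thesis
    using l_repr_independence[OF _ assms(2,1)] by simp
qed

(* tree_act and delta act on a coset through a SOME-chosen representative; this makes them
   well defined. *)
lemma (in group) some_lcos_repr:
  assumes "subgroup H G" "x \<in> carrier G" and f: "\<And>h. h \<in> H \<Longrightarrow> f (x \<otimes> h) = f x"
  shows "f (SOME y. y \<in> x <# H) = f x"
proof -
  have "(SOME y. y \<in> x <# H) \<in> x <# H"
    using lcos_self[OF assms(2,1)] by (rule someI)
  then obtain h where "h \<in> H" "(SOME y. y \<in> x <# H) = x \<otimes> h"
    unfolding l_coset_def by blast
  then show ?thesis using f by simp
qed

lemma hom_if_in_AutoGroup:
  assumes "subgroup \<Gamma> (AutoGroup A)" "\<gamma> \<in> \<Gamma>"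
  shows "\<gamma> \<in> hom A A"
  using subgroup.subset[OF assms(1)] assms(2) by (auto simp: AutoGroup_def auto_def)

locale virtual_endomorphism = group A for A (structure) +
  fixes B :: "'a set" and phi :: "'a \<Rightarrow> 'a"
  assumes virtual_endo: "virtual_endo A B phi"
begin

abbreviation V :: "nat \<Rightarrow> 'a set" where "V \<equiv> vpre A B phi"

lemma subgroup_domain: "subgroup B A"
  using virtual_endo unfolding virtual_endo_def by blast

lemma group_hom_phi: "group_hom (A\<lparr>carrier := B\<rparr>) A phi"
  using virtual_endo subgroup.subgroup_is_group[OF subgroup_domain is_group] is_group
  unfolding virtual_endo_def group_hom_def group_hom_axioms_def by blast

lemma phi_closed: "x \<in> B \<Longrightarrow> phi x \<in> carrier A"
  using group_hom.hom_closed[OF group_hom_phi] by simp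

lemma phi_mult: "x \<in> B \<Longrightarrow> y \<in> B \<Longrightarrow> phi (x \<otimes> y) = phi x \<otimes> phi y"
  using group_hom.hom_mult[OF group_hom_phi] by simp

lemma phi_one: "phi \<one> = \<one>"
  using group_hom.hom_one[OF group_hom_phi] by simp

lemma phi_inv: "x \<in> B \<Longrightarrow> phi (inv x) = inv (phi x)"
  using group_hom.hom_inv[OF group_hom_phi] subgroup_domain by simp

lemma vpre_one [simp]: "V (Suc 0) = B"
  using phi_closed by auto

lemma mem_vpre_Suc [simp]: "x \<in> V (Suc n) \<longleftrightarrow> x \<in> B \<and> phi x \<in> V n"
  by simp

declare vpre.simps(2) [simp del]

lemma subgroup_vpre: "subgroup (V n) A"
proof (induction n)
  case 0
  show ?case by (simp add: subgroup_self)
next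
  case (Suc n)
  show ?case
  proof (rule subgroupI)
    show "V (Suc n) \<subseteq> carrier A"
      using subgroup.mem_carrier[OF subgroup_domain] by auto
    have "\<one> \<in> V (Suc n)"
      using phi_one subgroup.one_closed[OF subgroup_domain] subgroup.one_closed[OF Suc.IH] by simp
    then show "V (Suc n) \<noteq> {}" by blast
  next
    fix x assume "x \<in> V (Suc n)"
    then show "inv x \<in> V (Suc n)"
      using phi_inv subgroup.m_inv_closed[OF subgroup_domain] subgroup.m_inv_closed[OF Suc.IH]
      by auto
  next
    fix x y assume "x \<in> V (Suc n)" "y \<in> V (Suc n)"
    then show "x \<otimes> y \<in> V (Suc n)"
      using phi_mult subgroup.m_closed[OF subgroup_domain] subgroup.m_closed[OF Suc.IH] by auto
  qed
qed

lemma inj_on_phi_if_proper: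
  assumes "proper_ve A B phi"
  shows "inj_on phi B"
proof -
  have "kernel (A\<lparr>carrier := B\<rparr>) A phi \<subseteq> V n" for n
    by (cases n) (auto simp: kernel_def subgroup.one_closed[OF subgroup_vpre]
        intro: subgroup.mem_carrier[OF subgroup_domain])
  then have "kernel (A\<lparr>carrier := B\<rparr>) A phi = {\<one>}"
    using assms group_hom.subgroup_kernel[OF group_hom_phi] subgroup.one_closed
    unfolding proper_ve_def by fastforce
  then show ?thesis
    using group_hom.inj_iff_trivial_ker[OF group_hom_phi] by simp
qed

lemma lcos_vpre_Suc_eq_iff:
  assumes "b \<in> B" "b' \<in> B"
  shows "b <# V (Suc n) = b' <# V (Suc n) \<longleftrightarrow> phi b <# V n = phi b' <# V n"
proof -
  have "inv b \<otimes> b' \<in> B"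
    using assms subgroup.m_closed[OF subgroup_domain] subgroup.m_inv_closed[OF subgroup_domain]
    by blast
  moreover have "phi (inv b \<otimes> b') = inv (phi b) \<otimes> phi b'"
    using assms phi_mult phi_inv subgroup.m_inv_closed[OF subgroup_domain] by simp
  ultimately show ?thesis
    using assms lcos_eq_iff[OF subgroup_vpre] phi_closed subgroup.mem_carrier[OF subgroup_domain]
    by simp
qed

lemma tree_act_lcos:
  assumes "a \<in> carrier A" "\<gamma> \<in> hom A A" "\<gamma> ` V n \<subseteq> V n" "x \<in> carrier A"
  shows "tree_act A B phi (a, \<gamma>) (n, x <# V n) = (n, (a \<otimes> \<gamma> x) <# V n)"
proof -
  have "(a \<otimes> \<gamma> (x \<otimes> h)) <# V n = (a \<otimes> \<gamma> x) <# V n" if "h \<in> V n" for h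
  proof -
    have h: "h \<in> carrier A" "\<gamma> h \<in> V n"
      using that assms(3) subgroup.mem_carrier[OF subgroup_vpre] by auto
    then have "a \<otimes> \<gamma> (x \<otimes> h) = (a \<otimes> \<gamma> x) \<otimes> \<gamma> h"
      using assms by (simp add: hom_mult hom_in_carrier m_assoc)
    then show ?thesis
      using assms h lcos_mult_absorb[OF subgroup_vpre] by (simp add: hom_in_carrier)
  qed
  then show ?thesis
    unfolding tree_act_def
    using some_lcos_repr[OF subgroup_vpre assms(4), where f = "\<lambda>y. (a \<otimes> \<gamma> y) <# V n"] by simp
qed

lemma delta_lcos:
  assumes "t \<in> carrier A" "b \<in> B"
  shows "delta A B phi t (Suc n, (t \<otimes> b) <# V (Suc n)) = (n, phi b <# V n)"
proof -
  define f where "f y = phi (inv t \<otimes> y) <# V n" for y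
  have b: "b \<in> carrier A"
    using assms(2) subgroup.mem_carrier[OF subgroup_domain] by blast
  then have tb: "t \<otimes> b \<in> carrier A"
    using assms(1) by simp
  have "f (t \<otimes> b \<otimes> h) = f (t \<otimes> b)" if "h \<in> V (Suc n)" for h
  proof -
    have "h \<in> B" "h \<in> carrier A" "phi h \<in> V n"
      using that subgroup.mem_carrier[OF subgroup_domain] by auto
    then show ?thesis
      unfolding f_def using assms b lcos_mult_absorb[OF subgroup_vpre] phi_mult phi_closed
      by (simp add: m_assoc[symmetric])
  qed
  then have "f (SOME y. y \<in> (t \<otimes> b) <# V (Suc n)) = f (t \<otimes> b)"
    by (rule some_lcos_repr[OF subgroup_vpre tb])
  then show ?thesis
    unfolding delta_def f_def using assms b by (simp add: m_assoc[symmetric])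
qed

lemma subtree_at_eq:
  assumes "t \<in> carrier A"
  shows "subtree_at A B phi t = {(Suc n, (t \<otimes> b) <# V (Suc n)) | n b. b \<in> B}"
proof (intro equalityI subsetI)
  fix w assume "w \<in> subtree_at A B phi t"
  then obtain n x where w: "w = (Suc n, x <# V (Suc n))" "x \<in> carrier A"
    and sub: "x <# V (Suc n) \<subseteq> t <# B"
    unfolding subtree_at_def coset_tree_def One_nat_def vpre_one by blast
  have "x \<in> t <# B"
    using sub lcos_self[OF w(2) subgroup_vpre] by blast
  then have "inv t \<otimes> x \<in> B"
    using lcos_mem_iff[OF subgroup_domain assms] by blast
  moreover have "w = (Suc n, (t \<otimes> (inv t \<otimes> x)) <# V (Suc n))"
    using assms w by (simp add: m_assoc[symmetric])
  ultimately show "w \<in> {(Suc n, (t \<otimes> b) <# V (Suc n)) | n b. b \<in> B}"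
    by blast
next
  fix w assume "w \<in> {(Suc n, (t \<otimes> b) <# V (Suc n)) | n b. b \<in> B}"
  then obtain n b where w: "w = (Suc n, (t \<otimes> b) <# V (Suc n))" and b: "b \<in> B"
    by blast
  then have "t \<otimes> b \<in> carrier A"
    using assms subgroup.mem_carrier[OF subgroup_domain] by blast
  then have "(Suc n, (t \<otimes> b) <# V (Suc n)) \<in> coset_tree A B phi"
    unfolding coset_tree_def by blast
  moreover have "(t \<otimes> b) <# V (Suc n) \<subseteq> (t \<otimes> b) <# B"
    unfolding l_coset_def by auto
  then have "(t \<otimes> b) <# V (Suc n) \<subseteq> t <# V 1"
    using lcos_mult_absorb[OF subgroup_domain assms b] by simp
  ultimately show "w \<in> subtree_at A B phi t"
    unfolding subtree_at_def w by blast
qed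

lemma inj_on_delta:
  assumes "t \<in> carrier A"
  shows "inj_on (delta A B phi t) (subtree_at A B phi t)"
proof (rule inj_onI)
  fix w w' assume "w \<in> subtree_at A B phi t" "w' \<in> subtree_at A B phi t"
    and eq: "delta A B phi t w = delta A B phi t w'"
  then obtain n b n' b' where w: "w = (Suc n, (t \<otimes> b) <# V (Suc n))" "b \<in> B"
    and w': "w' = (Suc n', (t \<otimes> b') <# V (Suc n'))" "b' \<in> B"
    unfolding subtree_at_eq[OF assms] by auto
  have "n' = n" "phi b <# V n = phi b' <# V n"
    using eq w w' delta_lcos[OF assms] by auto
  then have "b <# V (Suc n) = b' <# V (Suc n)"
    using lcos_vpre_Suc_eq_iff w(2) w'(2) by blast
  moreover have "(t \<otimes> c) <# V (Suc n) = t <# (c <# V (Suc n))" if "c \<in> B" for c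
    using lcos_m_assoc[OF subgroup.subset[OF subgroup_vpre] assms] that
      subgroup.mem_carrier[OF subgroup_domain] by simp
  ultimately show "w = w'"
    using w w' \<open>n' = n\<close> by simp
qed

lemma the_inv_into_delta:
  assumes "t \<in> carrier A" "b \<in> B"
  shows "the_inv_into (subtree_at A B phi t) (delta A B phi t) (n, phi b <# V n)
    = (Suc n, (t \<otimes> b) <# V (Suc n))"
  using the_inv_into_f_eq[OF inj_on_delta delta_lcos] subtree_at_eq assms by blast

lemma tree_act_level_one_eq_iff:
  assumes "a \<in> carrier A" "\<gamma> \<in> hom A A" "\<gamma> ` B \<subseteq> B" "t \<in> carrier A" "t' \<in> carrier A"
  shows "tree_act A B phi (a, \<gamma>) (1, t <# V 1) = (1, t' <# V 1) \<longleftrightarrow> a \<otimes> \<gamma> t \<in> t' <# B"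
proof -
  have at: "a \<otimes> \<gamma> t \<in> carrier A"
    using assms by (simp add: hom_in_carrier)
  have "tree_act A B phi (a, \<gamma>) (1, t <# V 1) = (1, (a \<otimes> \<gamma> t) <# B)"
    using tree_act_lcos[of a \<gamma> 1 t] assms by simp
  moreover have "(a \<otimes> \<gamma> t) <# B = t' <# B \<longleftrightarrow> a \<otimes> \<gamma> t \<in> t' <# B"
    using l_repr_independence[OF _ assms(5) subgroup_domain] lcos_self[OF at subgroup_domain]
    by auto
  ultimately show ?thesis
    by simp
qed

lemma tree_act_section:
  assumes surj: "phi ` B = carrier A"
    and a: "a \<in> carrier A"
    and \<gamma>: "\<gamma> \<in> hom A A" "\<And>n. \<gamma> ` V n \<subseteq> V n"
    and \<gamma>': "\<gamma>' \<in> hom A A" "\<And>n. \<gamma>' ` V n \<subseteq> V n" "\<And>b. b \<in> B \<Longrightarrow> \<gamma>' (phi b) = phi (\<gamma> b)"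
    and t: "t \<in> carrier A" "t' \<in> carrier A"
    and k: "k \<in> B" "a \<otimes> \<gamma> t = t' \<otimes> k"
    and v: "v \<in> coset_tree A B phi"
  shows "delta A B phi t' (tree_act A B phi (a, \<gamma>)
           (the_inv_into (subtree_at A B phi t) (delta A B phi t) v))
         = tree_act A B phi (phi k, \<gamma>') v"
proof -
  obtain n d where "v = (n, d <# V n)" "d \<in> carrier A"
    using v unfolding coset_tree_def by blast
  moreover have "d \<in> phi ` B"
    using \<open>d \<in> carrier A\<close> surj by simp
  ultimately obtain b where v_eq: "v = (n, phi b <# V n)" and b: "b \<in> B"
    by blast
  have b_carrier: "b \<in> carrier A" "k \<in> carrier A"
    using b k(1) subgroup.mem_carrier[OF subgroup_domain] by auto
  have \<gamma>b: "\<gamma> b \<in> B"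
    using b \<gamma>(2)[of 1] vpre_one by auto
  then have \<gamma>b_carrier: "\<gamma> b \<in> carrier A"
    using subgroup.mem_carrier[OF subgroup_domain] by blast
  have "a \<otimes> \<gamma> (t \<otimes> b) = t' \<otimes> (k \<otimes> \<gamma> b)"
    using a \<gamma>(1) t b_carrier \<gamma>b_carrier k(2)
    by (simp add: hom_mult hom_in_carrier m_assoc[symmetric])
  then have "tree_act A B phi (a, \<gamma>) (Suc n, (t \<otimes> b) <# V (Suc n))
      = (Suc n, (t' \<otimes> (k \<otimes> \<gamma> b)) <# V (Suc n))"
    using tree_act_lcos[OF a \<gamma>(1,2)] t b_carrier by simp
  moreover have "delta A B phi t' (Suc n, (t' \<otimes> (k \<otimes> \<gamma> b)) <# V (Suc n))
      = (n, phi (k \<otimes> \<gamma> b) <# V n)"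
    using delta_lcos[OF t(2)] k(1) \<gamma>b subgroup.m_closed[OF subgroup_domain] by blast
  moreover have "phi (k \<otimes> \<gamma> b) = phi k \<otimes> \<gamma>' (phi b)"
    using phi_mult[OF k(1) \<gamma>b] \<gamma>'(3)[OF b] by simp
  moreover have "tree_act A B phi (phi k, \<gamma>') v = (n, (phi k \<otimes> \<gamma>' (phi b)) <# V n)"
    using tree_act_lcos[OF phi_closed[OF k(1)] \<gamma>'(1,2)] phi_closed[OF b] v_eq by simp
  ultimately show ?thesis
    using the_inv_into_delta[OF t(1) b] v_eq by simp
qed

lemma self_similar_action_if_mutually_stable:
  assumes surj: "phi ` B = carrier A"
    and proper: "proper_ve A B phi"
    and \<Gamma>: "subgroup \<Gamma> (AutoGroup A)"
    and mutual: "mutually_stable A B phi \<Gamma>"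
  shows "self_similar_action A B phi \<Gamma>"
proof -
  have hom: "\<gamma> \<in> hom A A" if "\<gamma> \<in> \<Gamma>" for \<gamma>
    using \<Gamma> that by (rule hom_if_in_AutoGroup)
  have stable: "\<gamma> ` V n \<subseteq> V n" if "\<gamma> \<in> \<Gamma>" for \<gamma> n
    using mutual that unfolding mutually_stable_def stable_ve_def by blast
  show ?thesis
    unfolding self_similar_action_def
  proof (intro allI impI ballI)
    fix T a \<gamma> t t'
    assume T: "transversal A (V 1) T" "t \<in> T" "t' \<in> T" and a: "a \<in> carrier A" and \<gamma>: "\<gamma> \<in> \<Gamma>"
      and act: "tree_act A B phi (a, \<gamma>) (1, t <# V 1) = (1, t' <# V 1)"
    have t: "t \<in> carrier A" "t' \<in> carrier A"
      using T unfolding transversal_def by auto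
    have "a \<otimes> \<gamma> t \<in> t' <# B"
      using act tree_act_level_one_eq_iff[OF a hom[OF \<gamma>] _ t] stable[OF \<gamma>, of "Suc 0"] by simp
    then obtain k where k: "k \<in> B" "a \<otimes> \<gamma> t = t' \<otimes> k"
      unfolding l_coset_def by blast
    define \<gamma>' where "\<gamma>' = (\<lambda>d\<in>carrier A. phi (\<gamma> (the_inv_into B phi d)))"
    have "\<gamma>' \<in> \<Gamma>"
      using mutual \<gamma> unfolding mutually_stable_def \<gamma>'_def by blast
    moreover have "\<gamma>' (phi b) = phi (\<gamma> b)" if "b \<in> B" for b
      unfolding \<gamma>'_def using that inj_on_phi_if_proper[OF proper] phi_closed
      by (simp add: the_inv_into_f_f)
    ultimately show "\<exists>a''\<in>carrier A. \<exists>\<gamma>''\<in>\<Gamma>. \<forall>v\<in>coset_tree A B phi.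
        delta A B phi t' (tree_act A B phi (a, \<gamma>)
          (the_inv_into (subtree_at A B phi t) (delta A B phi t) v))
        = tree_act A B phi (a'', \<gamma>'') v"
      using tree_act_section[OF surj a hom[OF \<gamma>] stable[OF \<gamma>] hom stable _ t k]
        phi_closed[OF k(1)] by blast
  qed
qed

end

theorem lemma4p4:
  fixes A :: "('a, 'b) monoid_scheme" and B :: "'a set" and phi :: "'a \<Rightarrow> 'a"
    and \<Gamma> :: "('a \<Rightarrow> 'a) set"
  assumes "group A"
    and "virtual_endo A B phi"
    and "phi ` B = carrier A"
    and "proper_ve A B phi"
    and "subgroup \<Gamma> (AutoGroup A)"
    and "mutually_stable A B phi \<Gamma>"
  shows "self_similar_action A B phi \<Gamma>"
  using assms virtual_endomorphism.self_similar_action_if_mutually_stable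
  unfolding virtual_endomorphism_def virtual_endomorphism_axioms_def by blast

end
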